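(* Let $f=Fe_3F^*:D\to S^3_1$ be a CMC $1$ face with Weierstrass data $(g,\omega=h\,dz)$ and holomorphic null lift $F$, let $\varphi=dg/(g^2\omega)$, and let $p$ be a non-degenerate singular point. Then, with $\xi=\sqrt{-1}\,\overline{(g_z/g)}\,\partial_z-\sqrt{-1}\,(g_z/g)\,\partial_{\bar z}$, $$\xi f(p)=2|h(p)|^2\operatorname{Im}\varphi(p)\;F(p)\begin{pmatrix}1&g(p)\\\overline{g(p)}&1\end{pmatrix}F(p)^*.$$
   Context: $S^3_1=\{X\in\mathrm{Herm}(2):\det X=-1\}$. Given a domain $D\subset\mathbb{C}$, meromorphic $g$ and holomorphic $\omega=h\,dz$ with $(1+|g|^2)^2|\omega|^2$ Riemannian and $1-|g|^2\not\equiv0$, $F:D\to SL(2,\mathbb{C})$ is holomorphic with $F^{-1}dF=\begin{pmatrix}g&-g^2\\1&-g\end{pmatrix}\omega$, and $f=Fe_3F^*$, $e_3=\mathrm{diag}(1,-1)$, $F^*=\bar F^T$. Singular points are those with $|g|=1$; non-degenerate means additionally $dg(p)\ne0$. $\xi f$ denotes the directional derivative of the matrix-valued map $f$ along $\xi$. *)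

theory Defs
  imports "HOL-Complex_Analysis.Complex_Analysis"
begin

type_synonym cmat = "complex ^ 2 ^ 2"

definition mat2 :: "complex \<Rightarrow> complex \<Rightarrow> complex \<Rightarrow> complex \<Rightarrow> cmat" where
  "mat2 a b c d = (\<chi> i j. if i = 1 then (if j = 1 then a else b) else (if j = 1 then c else d))"

definition adjm :: "cmat \<Rightarrow> cmat" where
  "adjm A = (\<chi> i j. cnj (A $ j $ i))"

definition e3 :: cmat where "e3 = mat2 1 0 0 (-1)"

(* the coefficient matrix of F^{-1} dF = [[g,-g^2],[1,-g]] h dz *)
definition lift_coeff :: "complex \<Rightarrow> complex \<Rightarrow> cmat" where
  "lift_coeff gz hz = mat2 (gz * hz) (- (gz^2) * hz) hz (- gz * hz)"

definition cmc1_face_data ::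
  "complex set \<Rightarrow> (complex \<Rightarrow> complex) \<Rightarrow> (complex \<Rightarrow> complex) \<Rightarrow> (complex \<Rightarrow> cmat) \<Rightarrow> bool" where
  "cmc1_face_data D g h F \<longleftrightarrow>
     open D \<and> connected D \<and> D \<noteq> {} \<and>
     g meromorphic_on D \<and>
     (\<forall>z\<in>D. \<not> is_pole g z \<longrightarrow> isCont g z) \<and>
     h holomorphic_on D \<and>
     (\<forall>z\<in>D. \<exists>L>0. ((\<lambda>w. (1 + (cmod (g w))\<^sup>2)\<^sup>2 * (cmod (h w))\<^sup>2) \<longlongrightarrow> L) (at z)) \<and>
     (\<exists>z\<in>D. \<not> is_pole g z \<and> 1 - (cmod (g z))\<^sup>2 \<noteq> 0) \<and>
     (\<forall>i j. (\<lambda>w. F w $ i $ j) holomorphic_on D) \<and>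
     (\<forall>z\<in>D. det (F z) = 1) \<and>
     (\<forall>z\<in>D. \<not> is_pole g z \<longrightarrow>
        (\<forall>i j. ((\<lambda>w. F w $ i $ j) has_field_derivative (F z ** lift_coeff (g z) (h z)) $ i $ j) (at z)))"

definition face :: "(complex \<Rightarrow> cmat) \<Rightarrow> complex \<Rightarrow> cmat" where
  "face F z = F z ** e3 ** adjm (F z)"

end

(*
  The tangent vector xi at p is the real direction v = i * cnj (g_z / g) in the z-plane.
  Since dF = F * Phi dz with Phi = lift_coeff g h, the derivative of f = F e3 F^* in direction v
  is F (Phi v e3 + e3 (Phi v)^* ) F^*. When |g| = 1 this hermitian middle factor collapses to
  2 Re (g h v) [[1, g], [cnj g, 1]], and for the above v the scalar 2 Re (g h v) equals
  2 |h|^2 Im (g_z / (g^2 h)).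
*)
theory Submission
  imports Defs
begin

lemma mat2_nth: "mat2 a b c d $ i $ j = (if i = 1 then (if j = 1 then a else b) else (if j = 1 then c else d))"
  by (simp add: mat2_def)

lemma cnj_mult_self_unit: "cmod z = 1 \<Longrightarrow> cnj z * z = 1"
  by (metis complex_norm_square mult.commute of_real_1 power_one)

lemma has_derivative_vec_nthI:
  fixes f :: "'a::real_normed_vector \<Rightarrow> 'b::euclidean_space ^ 'n"
  assumes "\<And>i. ((\<lambda>x. f x $ i) has_derivative (\<lambda>v. f' v $ i)) (at x within S)"
  shows "(f has_derivative f') (at x within S)"
  using assms
  by (auto simp: has_derivative_componentwise_within[of f] Basis_vec_def inner_axis
      has_derivative_componentwise_within[of "\<lambda>x. f x $ i" for i])

lemma matrix_add_rdistrib: "(A + B) ** C = A ** C + B ** C"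
  by (vector matrix_matrix_mult_def sum.distrib[symmetric] field_simps)

lemma bounded_bilinear_matrix_matrix_mult:
  "bounded_bilinear ((**) :: 'a::{real_algebra_1,euclidean_space} ^ 'n ^ 'm \<Rightarrow> 'a ^ 'k ^ 'n \<Rightarrow> 'a ^ 'k ^ 'm)"
  unfolding bilinear_conv_bounded_bilinear[symmetric] bilinear_def
  by (auto intro!: linearI simp: matrix_add_ldistrib matrix_add_rdistrib matrix_scalar_ac scalar_matrix_assoc)

lemma bounded_linear_adjm: "bounded_linear adjm"
  unfolding linear_conv_bounded_linear[symmetric]
  by (rule linearI) (simp_all add: adjm_def vec_eq_iff)

lemma adjm_matrix_mult: "adjm (A ** B) = adjm B ** adjm A"
  by (simp add: adjm_def matrix_matrix_mult_def vec_eq_iff mult.commute)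

lemma face_has_derivative:
  assumes "(F has_derivative (\<lambda>v. F p ** L v)) (at p)"
  shows "(face F has_derivative (\<lambda>v. F p ** (L v ** e3 + e3 ** adjm (L v)) ** adjm (F p))) (at p)"
  unfolding face_def
  by (rule has_derivative_eq_rhs,
      (rule bounded_bilinear.FDERIV[OF bounded_bilinear_matrix_matrix_mult] has_derivative_const assms
        bounded_linear.has_derivative[OF bounded_linear_adjm])+)
    (simp add: fun_eq_iff adjm_matrix_mult matrix_mul_assoc matrix_add_ldistrib matrix_add_rdistrib)

lemma matrix_mult_lift_coeff_scale:
  "(A ** lift_coeff G (H * v)) $ i $ j = (A ** lift_coeff G H) $ i $ j * v"
  by (simp add: matrix_matrix_mult_def lift_coeff_def mat2_nth UNIV_2 algebra_simps)

lemma null_lift_has_derivative: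
  assumes "cmc1_face_data D g h F" "p \<in> D" "\<not> is_pole g p"
  shows "(F has_derivative (\<lambda>v. F p ** lift_coeff (g p) (h p * v))) (at p)"
proof (intro has_derivative_vec_nthI)
  fix i j
  have "((\<lambda>w. F w $ i $ j) has_field_derivative (F p ** lift_coeff (g p) (h p)) $ i $ j) (at p)"
    using assms unfolding cmc1_face_data_def by blast
  then show "((\<lambda>w. F w $ i $ j) has_derivative (\<lambda>v. (F p ** lift_coeff (g p) (h p * v)) $ i $ j)) (at p)"
    unfolding matrix_mult_lift_coeff_scale by (simp add: has_field_derivative_def)
qed

lemma lift_coeff_e3_hermitian_part:
  assumes "cmod G = 1"
  shows "lift_coeff G w ** e3 + e3 ** adjm (lift_coeff G w) = (2 * Re (G * w)) *\<^sub>R mat2 1 G (cnj G) 1"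
proof -
  have "cnj G * G = 1"
    using assms by (rule cnj_mult_self_unit)
  moreover have "complex_of_real (2 * Re (G * w)) = G * w + cnj G * cnj w"
    by (simp add: complex_eq_iff)
  ultimately show ?thesis
    by (simp add: vec_eq_iff forall_2 mat2_nth lift_coeff_def e3_def adjm_def matrix_matrix_mult_def UNIV_2
        scaleR_conv_of_real[where 'a=complex]) algebra
qed

lemma Re_unit_mult_i_cnj_div:
  assumes "cmod G = 1"
  shows "Re (G * (H * (\<i> * cnj (Q / G)))) = (cmod H)\<^sup>2 * Im (Q / (G\<^sup>2 * H))"
proof (cases "H = 0")
  case False
  have GG: "cnj G * G = 1"
    using assms by (rule cnj_mult_self_unit)
  then have "G \<noteq> 0" by auto
  define w where "w = Q * (cnj G)\<^sup>2 * cnj H"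
  have rotate: "G * (H * (\<i> * cnj (Q / G))) = \<i> * cnj w"
    using \<open>G \<noteq> 0\<close> GG by (simp add: w_def field_simps power2_eq_square)
  have quotient: "Q / (G\<^sup>2 * H) = w / complex_of_real ((cmod H)\<^sup>2)"
    using \<open>G \<noteq> 0\<close> GG False unfolding w_def complex_norm_square by (simp add: field_simps power2_eq_square)
  have "Re (G * (H * (\<i> * cnj (Q / G)))) = Im w"
    unfolding rotate by (simp only: Re_i_times cnj.sel(2) minus_minus)
  also have "\<dots> = (cmod H)\<^sup>2 * Im (Q / (G\<^sup>2 * H))"
    using False unfolding quotient by (simp add: Im_divide_of_real)
  finally show ?thesis .
qed simp

theorem lemma4p9:
  fixes D :: "complex set" and g h :: "complex \<Rightarrow> complex" and F :: "complex \<Rightarrow> cmat"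
    and p :: complex
  assumes "cmc1_face_data D g h F"
    and "p \<in> D" and "\<not> is_pole g p" and "cmod (g p) = 1" and "deriv g p \<noteq> 0"
  shows "\<exists>f'. (face F has_derivative f') (at p) \<and>
     f' (\<i> * cnj (deriv g p / g p)) =
       (2 * (cmod (h p))\<^sup>2 * Im (deriv g p / ((g p)\<^sup>2 * h p)))
         *\<^sub>R (F p ** mat2 1 (g p) (cnj (g p)) 1 ** adjm (F p))"
proof -
  define L where "L v = lift_coeff (g p) (h p * v)" for v
  define v where "v = \<i> * cnj (deriv g p / g p)"
  have "(F has_derivative (\<lambda>v. F p ** L v)) (at p)"
    unfolding L_def using null_lift_has_derivative assms(1-3) .
  then have "(face F has_derivative (\<lambda>v. F p ** (L v ** e3 + e3 ** adjm (L v)) ** adjm (F p))) (at p)"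
    by (rule face_has_derivative)
  moreover have "F p ** (L v ** e3 + e3 ** adjm (L v)) ** adjm (F p) =
      (2 * (cmod (h p))\<^sup>2 * Im (deriv g p / ((g p)\<^sup>2 * h p)))
        *\<^sub>R (F p ** mat2 1 (g p) (cnj (g p)) 1 ** adjm (F p))"
    unfolding L_def lift_coeff_e3_hermitian_part[OF assms(4)] v_def Re_unit_mult_i_cnj_div[OF assms(4)]
    by (simp only: matrix_scalar_ac mult.assoc flip: scalar_matrix_assoc)
  ultimately show ?thesis
    unfolding v_def by blast
qed

end
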